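(* Let $V$ be a set of $n$ vertices, $k$ a positive integer with $k<n$, $u,w\in V$ distinct, and $V_{uw}\subseteq V\setminus\{u,w\}$ a set of $k$ vertices partitioned as $V_{uw}=V_u\cup V_w$. Let $T_k$ be the set of all spanning trees $t$ of the complete graph $K_n$ on $V$ with at most $k$ leaves such that every vertex of $V_u$ is adjacent in $t$ only to $u$ and every vertex of $V_w$ is adjacent in $t$ only to $w$. For $t\in T_k$ let $t_h$ be the graph obtained by deleting the vertices of $V_{uw}$ and their incident edges (a Hamiltonian path on $V\setminus V_{uw}$ with end vertices $u$ and $w$). Let $HP_{uw}$ be the convex hull of the characteristic vectors (in $\mathbb{R}^{E'}$, $E'$ the edge set of the complete graph on $V\setminus V_{uw}$) of all Hamiltonian paths on $V\setminus V_{uw}$ with end vertices $u$ and $w$. Then for $t_1,t_2\in T_k$, the vertices $x=x(t_1)$ and $y=x(t_2)$ of $LCMST_{n,k}$ are nonadjacent if and only if the vertices $x_h=x(t_{1,h})$ and $y_h=x(t_{2,h})$ of $HP_{uw}$ are nonadjacent.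
   Context: For a subgraph $t$ of a complete graph, its characteristic vector $x(t)$ has coordinates indexed by the edges of that complete graph, equal to $1$ for edges of $t$ and $0$ otherwise. $LCMST_{n,k}$ is the convex hull of the characteristic vectors (in $\mathbb{R}^{n(n-1)/2}$) of all spanning trees of $K_n$ with at most $k$ leaves (vertices of degree $1$). Two vertices of a polytope are adjacent if the segment joining them is a 1-dimensional face of the polytope. *)

theory Defs
  imports "HOL-Analysis.Analysis"
begin

definition complete_edges :: "'a set \<Rightarrow> 'a set set" where
  "complete_edges V = {{a, b} | a b. a \<in> V \<and> b \<in> V \<and> a \<noteq> b}"

definition connected_graph :: "'a set \<Rightarrow> 'a set set \<Rightarrow> bool" where
  "connected_graph V t \<longleftrightarrow>
     (\<forall>a\<in>V. \<forall>b\<in>V. (a, b) \<in> {(x, y). {x, y} \<in> t}\<^sup>*)"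

definition has_cycle :: "'a set set \<Rightarrow> bool" where
  "has_cycle t \<longleftrightarrow>
     (\<exists>vs. length vs \<ge> 3 \<and> distinct vs \<and>
        (\<forall>i < length vs - 1. {vs ! i, vs ! Suc i} \<in> t) \<and>
        {last vs, hd vs} \<in> t)"

definition spanning_tree :: "'a set \<Rightarrow> 'a set set \<Rightarrow> bool" where
  "spanning_tree V t \<longleftrightarrow> t \<subseteq> complete_edges V \<and> connected_graph V t \<and> \<not> has_cycle t"

definition degree :: "'a set set \<Rightarrow> 'a \<Rightarrow> nat" where
  "degree t v = card {e \<in> t. v \<in> e}"

definition leaves :: "'a set \<Rightarrow> 'a set set \<Rightarrow> 'a set" where
  "leaves V t = {v \<in> V. degree t v = 1}"

definition ham_path :: "'a set \<Rightarrow> 'a \<Rightarrow> 'a \<Rightarrow> 'a set set \<Rightarrow> bool" where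
  "ham_path W u w p \<longleftrightarrow>
     (\<exists>vs. distinct vs \<and> set vs = W \<and> vs \<noteq> [] \<and> hd vs = u \<and> last vs = w \<and>
        p = {{vs ! i, vs ! Suc i} | i. i < length vs - 1})"

text \<open>Characteristic vector of an edge set, indexed by all 2-sets of vertices
  (coordinates outside the edge set of the relevant complete graph are always 0).\<close>
definition charvec :: "('a::finite) set set \<Rightarrow> real ^ ('a set)" where
  "charvec t = (\<chi> e. if e \<in> t then 1 else 0)"

definition LCMST :: "('a::finite) set \<Rightarrow> nat \<Rightarrow> (real ^ ('a set)) set" where
  "LCMST V k = convex hull (charvec ` {t. spanning_tree V t \<and> card (leaves V t) \<le> k})"

definition HP :: "('a::finite) set \<Rightarrow> 'a \<Rightarrow> 'a \<Rightarrow> (real ^ ('a set)) set" where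
  "HP W u w = convex hull (charvec ` {p. ham_path W u w p})"

definition adjacent_vertices :: "'v::euclidean_space set \<Rightarrow> 'v \<Rightarrow> 'v \<Rightarrow> bool" where
  "adjacent_vertices P x y \<longleftrightarrow>
     x extreme_point_of P \<and> y extreme_point_of P \<and>
     closed_segment x y face_of P \<and> aff_dim (closed_segment x y) = 1"

definition Tk :: "'a set \<Rightarrow> nat \<Rightarrow> 'a \<Rightarrow> 'a \<Rightarrow> 'a set \<Rightarrow> 'a set \<Rightarrow> 'a set set set" where
  "Tk V k u w Vu Vw = {t. spanning_tree V t \<and> card (leaves V t) \<le> k \<and>
      (\<forall>v\<in>Vu. \<forall>e\<in>t. v \<in> e \<longrightarrow> e = {v, u}) \<and>
      (\<forall>v\<in>Vw. \<forall>e\<in>t. v \<in> e \<longrightarrow> e = {v, w})}"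

definition delete_verts :: "'a set set \<Rightarrow> 'a set \<Rightarrow> 'a set set" where
  "delete_verts t X = {e \<in> t. e \<inter> X = {}}"

end

theory Submission
  imports Defs
begin

text \<open>
  For \<open>v \<in> Vuw\<close> let \<open>anchor v\<close> be \<open>u\<close> on \<open>Vu\<close> and \<open>w\<close> on \<open>Vw\<close>. The linear functional
  \<open>a\<close> with \<open>a(e) = \<Sum>v\<in>Vuw. [v \<in> e] - 2 [e = {v, anchor v}]\<close> takes on \<open>x(t)\<close> the value
  \<open>\<Sum>v\<in>Vuw. deg\<^sub>t v - 2 [{v, anchor v} \<in> t]\<close>. On a spanning tree every summand is at least
  \<open>-1\<close>, with equality iff the only edge at \<open>v\<close> is \<open>{v, anchor v}\<close>; so \<open>a \<ge> -k\<close> on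
  \<open>LCMST\<^sub>n\<^sub>,\<^sub>k\<close>, and the supporting face \<open>a = -k\<close> is the convex hull of the vectors
  \<open>x(t)\<close>, \<open>t \<in> T\<^sub>k\<close>. Adjacency of two vertices of a face is the same in the face and
  in the polytope.

  Every \<open>t \<in> T\<^sub>k\<close> is the disjoint union of \<open>t\<^sub>h\<close> and the fixed set \<open>P\<close> of pendant edges
  \<open>{v, anchor v}\<close>, and \<open>t\<^sub>h\<close> is an acyclic connected graph whose vertices other than
  \<open>u, w\<close> have two neighbours, hence a Hamiltonian \<open>u\<close>-\<open>w\<close> path. Conversely, attaching \<open>P\<close> to
  any such path gives a tree of \<open>T\<^sub>k\<close>: its leaves are exactly the \<open>k\<close> pendant vertices,
  because \<open>Vu\<close> and \<open>Vw\<close> are nonempty (otherwise \<open>u\<close> or \<open>w\<close> would be an extra leaf).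
  Hence the face is the translate of \<open>HP\<^sub>u\<^sub>w\<close> by \<open>x(P)\<close>, and adjacency is invariant under
  translation.
\<close>

section \<open>Polytope faces and translates\<close>

lemma adjacent_vertices_face_iff:
  assumes F: "F face_of P" and "x \<in> F" and "y \<in> F"
  shows "adjacent_vertices P x y \<longleftrightarrow> adjacent_vertices F x y"
proof -
  have "closed_segment x y \<subseteq> F"
    using face_of_imp_convex[OF F] assms(2,3) by (simp add: closed_segment_subset)
  then have "closed_segment x y face_of P \<longleftrightarrow> closed_segment x y face_of F"
    using F face_of_imp_subset[OF F] face_of_subset face_of_trans by blast
  then show ?thesis
    unfolding adjacent_vertices_def using extreme_point_of_face[OF F] assms(2,3) by blast
qed

lemma adjacent_vertices_translation:
  "adjacent_vertices ((+) c ` S) (c + x) (c + y) \<longleftrightarrow> adjacent_vertices S x y"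
proof -
  have "\<And>z. (c + z) extreme_point_of ((+) c ` S) \<longleftrightarrow> z extreme_point_of S"
    using extreme_point_of_translation_eq[of c _ S] by simp
  then show ?thesis
    by (simp add: adjacent_vertices_def closed_segment_translation aff_dim_translation_eq)
qed

lemma convex_hull_supporting_hyperplane_face_of:
  fixes S :: "'a::euclidean_space set"
  assumes "finite S" and ge: "\<And>x. x \<in> S \<Longrightarrow> a \<bullet> x \<ge> b"
  shows "convex hull {x \<in> S. a \<bullet> x = b} face_of convex hull S"
proof -
  define F where "F = convex hull S \<inter> {x. a \<bullet> x = b}"
  have "convex hull S \<subseteq> {x. a \<bullet> x \<ge> b}"
    using ge by (intro hull_minimal) (auto simp: convex_halfspace_ge)
  then have F: "F face_of convex hull S"
    unfolding F_def by (intro face_of_Int_supporting_hyperplane_ge) auto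
  obtain S' where S': "S' \<subseteq> S" "F = convex hull S'"
    using face_of_convex_hull_subset[OF finite_imp_compact[OF \<open>finite S\<close>] F] by blast
  then have "S' \<subseteq> {x \<in> S. a \<bullet> x = b}"
    using hull_subset[of S' convex] unfolding F_def by blast
  then have "F \<subseteq> convex hull {x \<in> S. a \<bullet> x = b}"
    using S'(2) hull_mono by blast
  moreover have "convex hull {x \<in> S. a \<bullet> x = b} \<subseteq> F"
    unfolding F_def
    by (intro hull_minimal) (auto intro: hull_subset[THEN subsetD] simp: convex_Int convex_hyperplane)
  ultimately show ?thesis using F by simp
qed

lemma inner_charvec: "a \<bullet> charvec t = (\<Sum>e\<in>t. a $ e)"
  unfolding inner_vec_def charvec_def by (simp add: if_distrib sum.If_cases)

lemma charvec_Un_disjoint: "A \<inter> B = {} \<Longrightarrow> charvec (A \<union> B) = charvec A + charvec B"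
  unfolding charvec_def by (auto simp: vec_eq_iff)

section \<open>Paths as vertex lists\<close>

fun path_edges :: "'a list \<Rightarrow> 'a set set" where
  "path_edges (x # y # xs) = insert {x, y} (path_edges (y # xs))"
| "path_edges _ = {}"

lemma path_edges_Cons:
  "path_edges (x # ys) = (if ys = [] then {} else insert {x, hd ys} (path_edges ys))"
  by (cases ys) auto

lemma Collect_less_Suc_eq_insert: "{f i | i. i < Suc n} = insert (f 0) {f (Suc i) | i. i < n}"
  by (auto simp: less_Suc_eq_0_disj)

lemma path_edges_conv_nth: "path_edges xs = {{xs ! i, xs ! Suc i} | i. i < length xs - 1}"
  by (induction xs rule: path_edges.induct) (simp_all add: Collect_less_Suc_eq_insert)

lemma ham_path_iff_path_edges:
  "ham_path W u w p \<longleftrightarrow>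
     (\<exists>L. distinct L \<and> set L = W \<and> L \<noteq> [] \<and> hd L = u \<and> last L = w \<and> p = path_edges L)"
  unfolding ham_path_def path_edges_conv_nth ..

lemma path_edges_append:
  "xs \<noteq> [] \<Longrightarrow> ys \<noteq> [] \<Longrightarrow> path_edges (xs @ ys) = path_edges xs \<union> path_edges ys \<union> {{last xs, hd ys}}"
  by (induction xs rule: path_edges.induct) (auto simp: path_edges_Cons)

lemma path_edges_append_mono: "path_edges xs \<union> path_edges ys \<subseteq> path_edges (xs @ ys)"
  by (cases "xs = [] \<or> ys = []") (auto simp: path_edges_append)

lemma path_edges_rev: "path_edges (rev xs) = path_edges xs"
proof (induction xs rule: path_edges.induct)
  case (1 x y xs)
  have "path_edges (rev (x # y # xs)) = path_edges (rev (y # xs) @ [x])" by simp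
  also have "\<dots> = path_edges (rev (y # xs)) \<union> {{y, x}}"
    by (subst path_edges_append) auto
  finally show ?case using "1.IH" by (auto simp: insert_commute)
qed auto

lemma path_edges_subset_set: "e \<in> path_edges xs \<Longrightarrow> e \<subseteq> set xs"
  by (induction xs rule: path_edges.induct) auto

lemma path_edges_consecutive: "{a, b} \<in> path_edges (xs @ a # b # ys)"
  using path_edges_append_mono[of xs "a # b # ys"] by auto

lemma path_edges_at_hd:
  "distinct (x # y # xs) \<Longrightarrow> {e \<in> path_edges (x # y # xs). x \<in> e} = {{x, y}}"
  using path_edges_subset_set[of _ "y # xs"] by auto

lemma card_path_edges_at_hd:
  assumes "distinct L" "2 \<le> length L"
  shows "card {e \<in> path_edges L. hd L \<in> e} = 1"
proof -
  obtain a b rest where "L = a # b # rest" using assms(2) by (cases L; cases "tl L") auto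
  then show ?thesis using path_edges_at_hd[of a b rest] assms(1) by simp
qed

lemma path_edges_nth_iff:
  assumes "distinct L" "i < length L" "j < length L"
  shows "{L ! i, L ! j} \<in> path_edges L \<longleftrightarrow> j = Suc i \<or> i = Suc j"
proof -
  have "{L ! i, L ! j} = {L ! k, L ! Suc k} \<longleftrightarrow> (i = k \<and> j = Suc k \<or> i = Suc k \<and> j = k)"
    if "k < length L - 1" for k
    using assms that by (auto simp: doubleton_eq_iff nth_eq_iff_index_eq)
  then show ?thesis using assms(2,3) unfolding path_edges_conv_nth by auto
qed

lemma path_edges_interior_two_neighbours:
  assumes "distinct L" "x \<in> set L" "x \<noteq> hd L" "x \<noteq> last L"
  shows "\<exists>y z. y \<noteq> z \<and> {x, y} \<in> path_edges L \<and> {x, z} \<in> path_edges L"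
proof -
  obtain i where i: "i < length L" "x = L ! i" using assms(2) by (auto simp: in_set_conv_nth)
  have "L \<noteq> []" using assms(2) by auto
  then have "i \<noteq> 0" "i \<noteq> length L - 1"
    using i assms(3,4) hd_conv_nth last_conv_nth by metis+
  then have "0 < i" "Suc i < length L" using i(1) by auto
  then have "{x, L ! (i - 1)} \<in> path_edges L" "{x, L ! Suc i} \<in> path_edges L"
    "L ! (i - 1) \<noteq> L ! Suc i"
    using i path_edges_nth_iff[OF assms(1)] assms(1) by (auto simp: nth_eq_iff_index_eq)
  then show ?thesis by blast
qed

lemma complete_edges_memD: "{a, b} \<in> complete_edges W \<Longrightarrow> a \<in> W \<and> b \<in> W \<and> a \<noteq> b"
  unfolding complete_edges_def by (auto simp: doubleton_eq_iff)

lemma complete_edges_mono: "A \<subseteq> B \<Longrightarrow> complete_edges A \<subseteq> complete_edges B"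
  unfolding complete_edges_def by blast

lemma path_edges_subset_complete_edges:
  assumes "distinct L"
  shows "path_edges L \<subseteq> complete_edges (set L)"
proof
  fix e assume "e \<in> path_edges L"
  then obtain i where i: "i < length L - 1" "e = {L ! i, L ! Suc i}"
    unfolding path_edges_conv_nth by blast
  then have "L ! i \<in> set L" "L ! Suc i \<in> set L" "L ! i \<noteq> L ! Suc i"
    using assms by (auto simp: nth_eq_iff_index_eq)
  then show "e \<in> complete_edges (set L)" unfolding complete_edges_def i(2) by blast
qed

lemma ham_path_edge_subset: "ham_path W u w p \<Longrightarrow> e \<in> p \<Longrightarrow> e \<subseteq> W"
  unfolding ham_path_iff_path_edges using path_edges_subset_set by blast

lemma obtain_last_two:
  assumes "length xs \<ge> 2" obtains ys p where "xs = ys @ [p, last xs]"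
proof (cases xs rule: rev_cases)
  case (snoc zs e)
  with assms that show ?thesis by (cases zs rule: rev_cases) auto
qed (use assms in simp)

lemma has_cycle_closed_path:
  assumes "distinct vs" "length vs \<ge> 3" "path_edges vs \<subseteq> t" "{last vs, hd vs} \<in> t"
  shows "has_cycle t"
  unfolding has_cycle_def using assms path_edges_conv_nth[of vs] by blast

lemma has_cycle_iff_closed_path:
  "has_cycle t \<longleftrightarrow> (\<exists>vs. distinct vs \<and> length vs \<ge> 3 \<and> path_edges (vs @ [hd vs]) \<subseteq> t)"
proof -
  have closing: "path_edges (vs @ [hd vs]) \<subseteq> t \<longleftrightarrow>
      (\<forall>i < length vs - 1. {vs ! i, vs ! Suc i} \<in> t) \<and> {last vs, hd vs} \<in> t"
    if "length vs \<ge> 3" for vs :: "'a list"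
  proof -
    have "vs \<noteq> []" using that by auto
    then show ?thesis
      using path_edges_append[of vs "[hd vs]"] by (auto simp: path_edges_conv_nth)
  qed
  show ?thesis
    unfolding has_cycle_def
  proof (intro iffI; elim exE conjE)
    fix vs :: "'a list"
    assume "length vs \<ge> 3" "distinct vs" "\<forall>i < length vs - 1. {vs ! i, vs ! Suc i} \<in> t"
      "{last vs, hd vs} \<in> t"
    then show "\<exists>vs. distinct vs \<and> length vs \<ge> 3 \<and> path_edges (vs @ [hd vs]) \<subseteq> t"
      using closing by blast
  next
    fix vs :: "'a list"
    assume "distinct vs" "length vs \<ge> 3" "path_edges (vs @ [hd vs]) \<subseteq> t"
    then show "\<exists>vs. length vs \<ge> 3 \<and> distinct vs \<and>
        (\<forall>i < length vs - 1. {vs ! i, vs ! Suc i} \<in> t) \<and> {last vs, hd vs} \<in> t"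
      using closing by blast
  qed
qed

lemma closed_path_two_neighbours:
  assumes "distinct vs" "length vs \<ge> 3" "x \<in> set vs"
  shows "\<exists>y\<in>set vs. \<exists>z\<in>set vs. y \<noteq> z \<and>
           {x, y} \<in> path_edges (vs @ [hd vs]) \<and> {x, z} \<in> path_edges (vs @ [hd vs])"
proof -
  obtain A B where vs: "vs = A @ x # B" using split_list[OF assms(3)] by blast
  consider "A = []" "length B \<ge> 2" | "B = []" "length A \<ge> 2" | "A \<noteq> []" "B \<noteq> []"
    using assms(2) vs by (cases A; cases B) auto
  then show ?thesis
  proof cases
    case 1
    then obtain b B' c where B: "B = b # B' @ [c]"
      by (cases B; cases "tl B" rule: rev_cases) auto
    then have "vs @ [hd vs] = [] @ x # b # B' @ [c, x]" "vs @ [hd vs] = (x # b # B') @ c # x # []"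
      using vs 1(1) by simp_all
    then have "{x, b} \<in> path_edges (vs @ [hd vs])" "{x, c} \<in> path_edges (vs @ [hd vs])"
      using path_edges_consecutive[of x b "[]"] path_edges_consecutive[of c x "x # b # B'" "[]"]
      by (simp_all add: insert_commute)
    moreover have "b \<noteq> c" using assms(1) vs B by auto
    ultimately show ?thesis using vs B by auto
  next
    case 2
    then obtain a A' c where A: "A = a # A' @ [c]"
      by (cases A; cases "tl A" rule: rev_cases) auto
    then have "vs @ [hd vs] = (a # A') @ c # x # [a]" "vs @ [hd vs] = (a # A' @ [c]) @ x # a # []"
      using vs 2(1) by simp_all
    then have "{x, c} \<in> path_edges (vs @ [hd vs])" "{x, a} \<in> path_edges (vs @ [hd vs])"
      using path_edges_consecutive[of c x "a # A'" "[a]"]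
        path_edges_consecutive[of x a "a # A' @ [c]" "[]"]
      by (simp_all add: insert_commute)
    moreover have "a \<noteq> c" using assms(1) vs A by auto
    ultimately show ?thesis using vs A by auto
  next
    case 3
    then obtain A' a b B' where AB: "A = A' @ [a]" "B = b # B'"
      by (cases A rule: rev_cases; cases B) auto
    then have "vs @ [hd vs] = A' @ a # x # (B @ [hd vs])" "vs @ [hd vs] = A @ x # b # (B' @ [hd vs])"
      using vs by simp_all
    then have "{x, a} \<in> path_edges (vs @ [hd vs])" "{x, b} \<in> path_edges (vs @ [hd vs])"
      using path_edges_consecutive[of a x A' "B @ [hd vs]"]
        path_edges_consecutive[of x b A "B' @ [hd vs]"]
      by (simp_all only: insert_commute)
    moreover have "a \<noteq> b" using assms(1) vs AB by auto
    ultimately show ?thesis using vs AB by auto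
  qed
qed

lemma has_cycle_mono: "has_cycle H \<Longrightarrow> H \<subseteq> t \<Longrightarrow> has_cycle t"
  unfolding has_cycle_def by blast

lemma acyclic_path_edges:
  assumes "distinct L"
  shows "\<not> has_cycle (path_edges L)"
proof
  assume "has_cycle (path_edges L)"
  then obtain vs where vs: "distinct vs" "length vs \<ge> 3" "path_edges (vs @ [hd vs]) \<subseteq> path_edges L"
    unfolding has_cycle_iff_closed_path by blast
  have nbrs: "\<exists>y\<in>set vs. \<exists>z\<in>set vs. y \<noteq> z \<and> {x, y} \<in> path_edges L \<and> {x, z} \<in> path_edges L"
    if "x \<in> set vs" for x
    using closed_path_two_neighbours[OF vs(1,2) that] vs(3) by blast
  have "set vs \<subseteq> set L"
    using nbrs path_edges_subset_set by blast
  \<comment> \<open>The cycle vertex furthest along \<open>L\<close> would need two distinct neighbours before it on \<open>L\<close>.\<close>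
  define I where "I = {i. i < length L \<and> L ! i \<in> set vs}"
  have "hd vs \<in> set vs" using vs(2) by (cases vs) auto
  then obtain i where "i < length L" "L ! i = hd vs"
    using \<open>set vs \<subseteq> set L\<close> by (metis in_set_conv_nth subsetD)
  then have "finite I" "I \<noteq> {}" using \<open>hd vs \<in> set vs\<close> unfolding I_def by auto
  define m where "m = Max I"
  have m: "m < length L" "L ! m \<in> set vs" and below: "\<And>j. j \<in> I \<Longrightarrow> j \<le> m"
    using Max_in[OF \<open>finite I\<close> \<open>I \<noteq> {}\<close>] \<open>finite I\<close> unfolding m_def I_def by auto
  have pred: "y = L ! (m - 1)" if y: "y \<in> set vs" and edge: "{L ! m, y} \<in> path_edges L" for y
  proof -
    have "y \<in> set L" using y \<open>set vs \<subseteq> set L\<close> by blast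
    then obtain j where j: "j < length L" "y = L ! j" by (auto simp: in_set_conv_nth)
    then have "j \<le> m" using below y unfolding I_def by blast
    then show ?thesis using edge j path_edges_nth_iff[OF assms m(1) j(1)] by auto
  qed
  obtain y z where "y \<in> set vs" "z \<in> set vs" "y \<noteq> z" "{L ! m, y} \<in> path_edges L" "{L ! m, z} \<in> path_edges L"
    using nbrs[OF m(2)] by blast
  then show False using pred by blast
qed

lemma has_cycle_Un_pendant_edges:
  assumes cyc: "has_cycle (H \<union> P)" and pendant: "\<forall>e\<in>P. \<exists>v\<in>e. \<forall>e'\<in>H \<union> P. v \<in> e' \<longrightarrow> e' = e"
  shows "has_cycle H"
proof -
  obtain vs where vs: "distinct vs" "length vs \<ge> 3" "path_edges (vs @ [hd vs]) \<subseteq> H \<union> P"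
    using cyc unfolding has_cycle_iff_closed_path by blast
  have "e \<notin> P" if e: "e \<in> path_edges (vs @ [hd vs])" for e
  proof
    assume "e \<in> P"
    then obtain v where v: "v \<in> e" "\<forall>e'\<in>H \<union> P. v \<in> e' \<longrightarrow> e' = e" using pendant by blast
    have "v \<in> set vs" using path_edges_subset_set[OF e] v(1) vs(2) by (cases vs) auto
    then obtain y z where "y \<noteq> z" "{v, y} \<in> path_edges (vs @ [hd vs])" "{v, z} \<in> path_edges (vs @ [hd vs])"
      using closed_path_two_neighbours[OF vs(1,2) \<open>v \<in> set vs\<close>] by blast
    then have "{v, y} \<in> H \<union> P" "{v, z} \<in> H \<union> P" using vs(3) by auto
    then have "{v, y} = e" "{v, z} = e" using v(2) insertI1 by meson+
    then have "{v, y} = {v, z}" by simp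
    then show False using \<open>y \<noteq> z\<close> by (simp add: doubleton_eq_iff)
  qed
  then have "path_edges (vs @ [hd vs]) \<subseteq> H" using vs(3) by blast
  then show ?thesis unfolding has_cycle_iff_closed_path using vs(1,2) by blast
qed

lemma degree_pos_iff: "finite t \<Longrightarrow> 0 < degree t v \<longleftrightarrow> (\<exists>e\<in>t. v \<in> e)"
  unfolding degree_def by (auto simp: card_gt_0_iff)

lemma two_le_degree_iff:
  assumes "finite t" "t \<subseteq> complete_edges V"
  shows "2 \<le> degree t v \<longleftrightarrow> (\<exists>x y. x \<noteq> y \<and> {v, x} \<in> t \<and> {v, y} \<in> t)"
proof
  assume "2 \<le> degree t v"
  then have "\<not> card {e \<in> t. v \<in> e} \<le> Suc 0" unfolding degree_def by simp
  then obtain e1 e2 where e: "e1 \<in> t" "e2 \<in> t" "v \<in> e1" "v \<in> e2" "e1 \<noteq> e2"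
    using card_le_Suc0_iff_eq[of "{e \<in> t. v \<in> e}"] assms(1) by auto
  have "\<exists>x. e = {v, x}" if "e \<in> t" "v \<in> e" for e
    using that assms(2) unfolding complete_edges_def by auto
  then obtain x y where "e1 = {v, x}" "e2 = {v, y}" using e by meson
  then show "\<exists>x y. x \<noteq> y \<and> {v, x} \<in> t \<and> {v, y} \<in> t" using e by blast
next
  assume "\<exists>x y. x \<noteq> y \<and> {v, x} \<in> t \<and> {v, y} \<in> t"
  then obtain x y where xy: "x \<noteq> y" "{v, x} \<in> t" "{v, y} \<in> t" by blast
  then have "2 = card {{v, x}, {v, y}}" by (simp add: doubleton_eq_iff)
  also have "\<dots> \<le> degree t v"
    unfolding degree_def using xy assms(1) by (intro card_mono) auto
  finally show "2 \<le> degree t v" .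
qed

lemma degree_pendant_bound:
  assumes "finite t" "e0 \<in> t" "v \<in> e0" "v \<in> p"
  shows "real (degree t v) - (if p \<in> t then 2 else 0) \<ge> -1"
    and "real (degree t v) - (if p \<in> t then 2 else 0) = -1 \<longleftrightarrow> (\<forall>e\<in>t. v \<in> e \<longrightarrow> e = p)"
proof -
  have "1 \<le> degree t v" using degree_pos_iff[OF assms(1)] assms(2,3) by force
  consider (only) "\<forall>e\<in>t. v \<in> e \<longrightarrow> e = p" | (other) e1 where "e1 \<in> t" "v \<in> e1" "e1 \<noteq> p"
    by blast
  then have cases: "(\<forall>e\<in>t. v \<in> e \<longrightarrow> e = p) \<and> degree t v = 1 \<and> p \<in> t \<or>
      \<not> (\<forall>e\<in>t. v \<in> e \<longrightarrow> e = p) \<and> real (degree t v) - (if p \<in> t then 2 else 0) \<ge> 0"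
  proof cases
    case only
    then have "{e \<in> t. v \<in> e} = {p}" "p \<in> t" using assms(2,3,4) by auto
    then show ?thesis using only unfolding degree_def by simp
  next
    case other
    have "2 \<le> degree t v" if "p \<in> t"
    proof -
      have "card {e1, p} \<le> degree t v"
        unfolding degree_def using other that assms(1,4) by (intro card_mono) auto
      then show ?thesis using other by simp
    qed
    then show ?thesis using other \<open>1 \<le> degree t v\<close> by auto
  qed
  then show "real (degree t v) - (if p \<in> t then 2 else 0) \<ge> -1" by auto
  from cases show "real (degree t v) - (if p \<in> t then 2 else 0) = -1 \<longleftrightarrow> (\<forall>e\<in>t. v \<in> e \<longrightarrow> e = p)"
    by auto
qed

lemma rtrancl_edge_leaving:
  assumes "(a, b) \<in> {(x, y). {x, y} \<in> H}\<^sup>*" "a \<in> S" "b \<notin> S"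
  shows "\<exists>x y. x \<in> S \<and> y \<notin> S \<and> {x, y} \<in> H"
  using assms by (induction rule: rtrancl_induct) auto

lemma rtrancl_first_edge:
  assumes "(a, b) \<in> {(x, y). {x, y} \<in> H}\<^sup>*" "a \<noteq> b"
  shows "\<exists>y. {a, y} \<in> H"
  using assms by (induction rule: converse_rtrancl_induct) auto

lemma rtrancl_edges_sym:
  "(a, b) \<in> {(x, y). {x, y} \<in> t}\<^sup>* \<Longrightarrow> (b, a) \<in> {(x, y). {x, y} \<in> t}\<^sup>*"
  using sym_rtrancl[of "{(x, y). {x, y} \<in> t}"] by (auto simp: sym_def insert_commute dest: symD)

lemma rtrancl_path_edges:
  "path_edges L \<subseteq> t \<Longrightarrow> x \<in> set L \<Longrightarrow> (hd L, x) \<in> {(a, b). {a, b} \<in> t}\<^sup>*"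
proof (induction L rule: path_edges.induct)
  case (1 a b xs)
  then have "(b, x) \<in> {(a, b). {a, b} \<in> t}\<^sup>* \<or> x = a" by auto
  moreover have "(a, b) \<in> {(a, b). {a, b} \<in> t}" using "1.prems"(1) by auto
  ultimately show ?case by (auto intro: converse_rtrancl_into_rtrancl)
qed auto

lemma connected_graph_path_edges: "connected_graph (set L) (path_edges L)"
  unfolding connected_graph_def
proof (intro ballI)
  let ?R = "{(x, y). {x, y} \<in> path_edges L}"
  fix a b assume "a \<in> set L" "b \<in> set L"
  have "(hd L, a) \<in> ?R\<^sup>*" by (rule rtrancl_path_edges[OF subset_refl]) fact
  moreover have "(hd L, b) \<in> ?R\<^sup>*" by (rule rtrancl_path_edges[OF subset_refl]) fact
  ultimately show "(a, b) \<in> ?R\<^sup>*" by (rule rtrancl_trans[OF rtrancl_edges_sym])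
qed

lemma connected_graph_attach:
  assumes conn: "connected_graph W H" and "H \<subseteq> t"
    and attach: "\<And>v. v \<in> X \<Longrightarrow> f v \<in> W \<and> {v, f v} \<in> t"
  shows "connected_graph (W \<union> X) t"
  unfolding connected_graph_def
proof (intro ballI)
  let ?R = "{(x, y). {x, y} \<in> t}"
  define g where "g a = (if a \<in> W then a else f a)" for a
  have g: "g a \<in> W" "(a, g a) \<in> ?R\<^sup>*" if "a \<in> W \<union> X" for a
    using that attach[of a] unfolding g_def by auto
  have HR: "(a, b) \<in> ?R\<^sup>*" if "a \<in> W" "b \<in> W" for a b
  proof -
    have "(a, b) \<in> {(x, y). {x, y} \<in> H}\<^sup>*" using conn that unfolding connected_graph_def by blast
    moreover have "{(x, y). {x, y} \<in> H} \<subseteq> ?R" using \<open>H \<subseteq> t\<close> by auto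
    ultimately show ?thesis using rtrancl_mono by blast
  qed
  fix a b assume ab: "a \<in> W \<union> X" "b \<in> W \<union> X"
  have "(a, g a) \<in> ?R\<^sup>*" "(g a, g b) \<in> ?R\<^sup>*" "(g b, b) \<in> ?R\<^sup>*"
    using g[OF ab(1)] g[OF ab(2)] HR rtrancl_edges_sym by auto
  then show "(a, b) \<in> ?R\<^sup>*" by (meson rtrancl_trans)
qed

lemma delete_verts_subset_complete_edges:
  assumes "t \<subseteq> complete_edges V"
  shows "delete_verts t X \<subseteq> complete_edges (V - X)"
proof
  fix e assume "e \<in> delete_verts t X"
  then have "e \<in> t" "e \<inter> X = {}" unfolding delete_verts_def by auto
  then obtain a b where "e = {a, b}" "a \<in> V" "b \<in> V" "a \<noteq> b"
    using assms unfolding complete_edges_def by blast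
  moreover have "a \<notin> X" "b \<notin> X" using \<open>e \<inter> X = {}\<close> calculation(1) by auto
  ultimately show "e \<in> complete_edges (V - X)" unfolding complete_edges_def by blast
qed

lemma connected_graph_delete_pendants:
  assumes conn: "connected_graph V t" and sub: "t \<subseteq> complete_edges V"
    and pendant: "\<And>v e. v \<in> X \<Longrightarrow> e \<in> t \<Longrightarrow> v \<in> e \<Longrightarrow> e = {v, f v}"
    and anchor: "\<And>v. v \<in> X \<Longrightarrow> f v \<notin> X"
  shows "connected_graph (V - X) (delete_verts t X)"
proof -
  let ?R = "{(x, y). {x, y} \<in> delete_verts t X}"
  \<comment> \<open>Moving pendant vertices to their anchors turns each step of a walk in \<open>t\<close>
    into a loop or an edge avoiding \<open>X\<close>.\<close>
  define g where "g a = (if a \<in> X then f a else a)" for a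
  have reach: "(a, g x) \<in> ?R\<^sup>*" if "(a, x) \<in> {(x, y). {x, y} \<in> t}\<^sup>*" "a \<notin> X" for a x
    using that(1)
  proof (induction rule: rtrancl_induct)
    case base
    then show ?case using that(2) unfolding g_def by simp
  next
    case (step y z)
    have yz: "{y, z} \<in> t" "y \<noteq> z"
      using step.hyps(2) sub complete_edges_memD[of y z V] by auto
    have "g z = g y \<or> (g y, g z) \<in> ?R"
    proof -
      consider "y \<in> X" | "z \<in> X" | "y \<notin> X" "z \<notin> X" by blast
      then show ?thesis
      proof cases
        case 1
        then have "{y, z} = {y, f y}" using pendant yz(1) by blast
        then have "z = f y" using yz(2) by (simp add: doubleton_eq_iff)
        then show ?thesis using 1 anchor unfolding g_def by simp
      next
        case 2
        then have "{y, z} = {z, f z}" using pendant yz(1) by blast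
        then have "y = f z" using yz(2) by (auto simp: doubleton_eq_iff)
        then show ?thesis using 2 anchor unfolding g_def by simp
      next
        case 3
        then show ?thesis using yz unfolding g_def delete_verts_def by auto
      qed
    qed
    then show ?case using step.IH by (auto intro: rtrancl_into_rtrancl)
  qed
  show ?thesis
    unfolding connected_graph_def
  proof (intro ballI)
    fix a b assume ab: "a \<in> V - X" "b \<in> V - X"
    then have "(a, b) \<in> {(x, y). {x, y} \<in> t}\<^sup>*" using conn unfolding connected_graph_def by blast
    then have "(a, g b) \<in> ?R\<^sup>*" using reach ab(1) by blast
    then show "(a, b) \<in> ?R\<^sup>*" using ab(2) unfolding g_def by simp
  qed
qed

lemma spanning_tree_edge_at:
  assumes "spanning_tree V t" "a \<in> V" "b \<in> V" "a \<noteq> b"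
  shows "\<exists>e\<in>t. a \<in> e"
proof -
  have "(a, b) \<in> {(x, y). {x, y} \<in> t}\<^sup>*"
    using assms unfolding spanning_tree_def connected_graph_def by blast
  then show ?thesis using rtrancl_first_edge[of a b t] assms(4) by blast
qed

section \<open>Acyclic connected graphs with inner vertices of degree two\<close>

lemma acyclic_path_chord:
  assumes L: "distinct L" "path_edges L \<subseteq> H" and acyc: "\<not> has_cycle H"
    and ab: "a \<in> set L" "b \<in> set L" "a \<noteq> b" "{a, b} \<in> H"
  shows "{a, b} \<in> path_edges L"
proof -
  have ordered: "{x, y} \<in> path_edges L"
    if split: "L = L1 @ x # M @ y # L2" and xy: "{x, y} \<in> H" for L1 x M y L2
  proof (cases M)
    case Nil
    then show ?thesis using split path_edges_consecutive by simp
  next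
    case (Cons z M')
    let ?C = "x # M @ [y]"
    have "distinct ?C" "path_edges ?C \<subseteq> H"
      using L split path_edges_append_mono[of L1 "?C @ L2"] path_edges_append_mono[of ?C L2] by auto
    moreover have "length ?C \<ge> 3" "{last ?C, hd ?C} \<in> H"
      using Cons xy by (auto simp: insert_commute)
    ultimately show ?thesis using acyc has_cycle_closed_path by blast
  qed
  obtain L1 L2 where L12: "L = L1 @ a # L2" using split_list[OF ab(1)] by blast
  then have "b \<in> set L1 \<or> b \<in> set L2" using ab by auto
  then show ?thesis
  proof
    assume "b \<in> set L1"
    then obtain L0 M where "L1 = L0 @ b # M" by (meson split_list)
    then show ?thesis using ordered[of L0 b M a L2] L12 ab(4) by (simp add: insert_commute)
  next
    assume "b \<in> set L2"
    then obtain M L3 where "L2 = M @ b # L3" by (meson split_list)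
    then show ?thesis using ordered L12 ab(4) by simp
  qed
qed

lemma acyclic_path_last_neighbour:
  assumes "distinct L" "path_edges L \<subseteq> H" "\<not> has_cycle H" "L = L0 @ [p, e]"
    and "z \<in> set L" "z \<noteq> e" "{e, z} \<in> H"
  shows "z = p"
proof -
  have "{e, z} \<in> path_edges L"
    by (rule acyclic_path_chord[OF assms(1-3)]) (use assms(4-7) in auto)
  then have "{e, z} \<in> {d \<in> path_edges L. e \<in> d}" by simp
  also have "path_edges L = path_edges (e # p # rev L0)"
    using path_edges_rev[of L] assms(4) by simp
  also have "{d \<in> path_edges (e # p # rev L0). e \<in> d} = {{e, p}}"
    by (rule path_edges_at_hd) (use assms(1,4) in auto)
  finally show ?thesis using assms(6) by (auto simp: doubleton_eq_iff)
qed

lemma acyclic_path_no_detour: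
  assumes L: "distinct L" "path_edges L \<subseteq> H" and acyc: "\<not> has_cycle H"
    and ab: "a \<in> set L" "b \<in> set L" "a \<noteq> b"
    and B: "distinct B" "B \<noteq> []" "set B \<inter> set L = {}" "path_edges (a # B @ [b]) \<subseteq> H"
  shows False
proof -
  have ordered: False
    if split: "L = L1 @ x # M @ y # L2" and D: "distinct D" "D \<noteq> []" "set D \<inter> set L = {}"
      and xy: "path_edges (x # D @ [y]) \<subseteq> H" for L1 x M y L2 D
  proof -
    let ?C = "(x # D) @ (y # rev M)"
    have "path_edges (M @ [y]) \<subseteq> H"
      using L split path_edges_append_mono[of "L1 @ [x]" "(M @ [y]) @ L2"]
        path_edges_append_mono[of "M @ [y]" L2] by auto
    then have "path_edges (y # rev M) \<subseteq> H" using path_edges_rev[of "M @ [y]"] by simp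
    moreover have "path_edges (x # D @ [y]) = path_edges (x # D) \<union> {{last D, y}}"
      using path_edges_append[of "x # D" "[y]"] D(2) by simp
    ultimately have "path_edges ?C \<subseteq> H"
      using xy D(2) by (subst path_edges_append) auto
    moreover have "{x, hd (M @ [y])} \<in> H"
      using L split path_edges_consecutive[of x "hd (M @ [y])" L1 "tl (M @ [y]) @ L2"]
      by (cases M) auto
    then have "{last ?C, hd ?C} \<in> H" by (cases M) (auto simp: insert_commute)
    moreover have "distinct ?C" using L split D by auto
    moreover have "length ?C \<ge> 3" using D(2) by (cases D) auto
    ultimately show False using acyc has_cycle_closed_path by blast
  qed
  obtain L1 L2 where L12: "L = L1 @ a # L2" using split_list[OF ab(1)] by blast
  then have "b \<in> set L1 \<or> b \<in> set L2" using ab by auto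
  then show False
  proof
    assume "b \<in> set L1"
    then obtain L0 M where "L1 = L0 @ b # M" by (meson split_list)
    moreover have "path_edges (b # rev B @ [a]) \<subseteq> H"
      using B(4) path_edges_rev[of "a # B @ [b]"] by simp
    ultimately show False using ordered[of L0 b M a L2 "rev B"] L12 B(1-3) by auto
  next
    assume "b \<in> set L2"
    then obtain M L3 where "L2 = M @ b # L3" by (meson split_list)
    then show False using ordered[of L1 a M b L3 B] L12 B by simp
  qed
qed

lemma path_extend_maximal:
  assumes "finite A" "distinct xs" "xs \<noteq> []" "path_edges xs \<subseteq> H"
  shows "\<exists>ys. distinct (xs @ ys) \<and> path_edges (xs @ ys) \<subseteq> H \<and> set ys \<subseteq> A \<and>
            (\<forall>z\<in>A. {last (xs @ ys), z} \<in> H \<longrightarrow> z \<in> set (xs @ ys))"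
  using assms(2-4)
proof (induction "card (A - set xs)" arbitrary: xs rule: less_induct)
  case less
  show ?case
  proof (cases "\<forall>z\<in>A. {last xs, z} \<in> H \<longrightarrow> z \<in> set xs")
    case True
    then show ?thesis using less.prems by (intro exI[of _ "[]"]) auto
  next
    case False
    then obtain z where z: "z \<in> A" "{last xs, z} \<in> H" "z \<notin> set xs" by blast
    have "card (A - set (xs @ [z])) < card (A - set xs)"
      using z assms(1) by (intro psubset_card_mono) auto
    moreover have "distinct (xs @ [z])" "path_edges (xs @ [z]) \<subseteq> H"
      using less.prems z by (auto simp: path_edges_append)
    ultimately obtain ys where "distinct ((xs @ [z]) @ ys)" "path_edges ((xs @ [z]) @ ys) \<subseteq> H"
      "set ys \<subseteq> A" "\<forall>z'\<in>A. {last ((xs @ [z]) @ ys), z'} \<in> H \<longrightarrow> z' \<in> set ((xs @ [z]) @ ys)"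
      using less.hyps by blast
    then show ?thesis using z by (intro exI[of _ "z # ys"]) auto
  qed
qed

text \<open>A maximal path leaving \<open>L\<close> ends at a vertex whose second neighbour can lie neither on that
  path nor, by maximality, outside \<open>L\<close>; so the path would close a cycle through \<open>L\<close>.\<close>

lemma acyclic_connected_path_spans:
  assumes fin: "finite W" and sub: "H \<subseteq> complete_edges W" and acyc: "\<not> has_cycle H"
    and conn: "connected_graph W H"
    and L: "distinct L" "L \<noteq> []" "path_edges L \<subseteq> H" "set L \<subseteq> W"
    and two_nbrs: "\<forall>v\<in>W - set L. \<exists>x y. x \<noteq> y \<and> {v, x} \<in> H \<and> {v, y} \<in> H"
  shows "set L = W"
proof (rule ccontr)
  assume "set L \<noteq> W"
  then obtain z where z: "z \<in> W" "z \<notin> set L" using L(4) by blast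
  have "hd L \<in> set L" using L(2) by simp
  moreover have "(hd L, z) \<in> {(x, y). {x, y} \<in> H}\<^sup>*"
    using conn z(1) L(4) hd_in_set[OF L(2)] unfolding connected_graph_def by blast
  ultimately obtain y z' where yz: "y \<in> set L" "z' \<notin> set L" "{y, z'} \<in> H"
    using rtrancl_edge_leaving[of "hd L" z H "set L"] z(2) by blast
  then have "z' \<in> W" "y \<noteq> z'" using complete_edges_memD[of y z' W] sub by auto
  then obtain bs where bs: "distinct ([y, z'] @ bs)" "path_edges ([y, z'] @ bs) \<subseteq> H"
      "set bs \<subseteq> W - set L"
      "\<forall>v\<in>W - set L. {last ([y, z'] @ bs), v} \<in> H \<longrightarrow> v \<in> set ([y, z'] @ bs)"
    using path_extend_maximal[of "W - set L" "[y, z']" H] fin yz by auto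
  define P where "P = y # z' # bs"
  have P: "distinct P" "path_edges P \<subseteq> H" "length P \<ge> 2"
    and outside: "set (z' # bs) \<inter> set L = {}"
    using bs yz(2) unfolding P_def by auto
  have "last P \<in> W - set L"
    using bs yz(2) \<open>z' \<in> W\<close> unfolding P_def by (cases bs rule: rev_cases) auto
  then obtain x1 x2 where x12: "x1 \<noteq> x2" "{last P, x1} \<in> H" "{last P, x2} \<in> H"
    using two_nbrs by blast
  obtain P0 p where P0: "P = P0 @ [p, last P]" using obtain_last_two[OF P(3)] by blast
  obtain n where n: "n \<noteq> p" "{last P, n} \<in> H"
    using x12 by metis
  then have "n \<in> W" "n \<noteq> last P" using complete_edges_memD[of "last P" n W] sub by auto
  then have "n \<notin> set P" using acyclic_path_last_neighbour[OF P(1,2) acyc P0 _ _ n(2)] n(1) by blast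
  then have "n \<in> set L" "n \<noteq> y" using bs(4) \<open>n \<in> W\<close> n(2) unfolding P_def by auto
  moreover have "path_edges (y # (z' # bs) @ [n]) \<subseteq> H"
    using P(2) n(2) path_edges_append[of P "[n]"] unfolding P_def by auto
  moreover have "distinct (z' # bs)" using P(1) unfolding P_def by simp
  ultimately show False
    using acyclic_path_no_detour[OF L(1,3) acyc yz(1), of n "z' # bs"] outside by blast
qed

lemma ham_path_of_acyclic_connected:
  assumes fin: "finite W" and sub: "H \<subseteq> complete_edges W" and acyc: "\<not> has_cycle H"
    and conn: "connected_graph W H" and uw: "u \<in> W" "w \<in> W" "u \<noteq> w"
    and two_nbrs: "\<forall>v\<in>W - {u, w}. \<exists>x y. x \<noteq> y \<and> {v, x} \<in> H \<and> {v, y} \<in> H"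
  shows "\<exists>L. distinct L \<and> set L = W \<and> hd L = u \<and> last L = w \<and> H = path_edges L"
proof -
  have "(u, w) \<in> {(x, y). {x, y} \<in> H}\<^sup>*" using conn uw unfolding connected_graph_def by blast
  then obtain y where y: "{u, y} \<in> H" using rtrancl_first_edge[of u w H] uw(3) by blast
  then have "y \<in> W" "u \<noteq> y" using complete_edges_memD[of u y W] sub by auto
  then obtain ys where ys: "distinct (u # y # ys)" "path_edges (u # y # ys) \<subseteq> H" "set ys \<subseteq> W"
      "\<forall>z\<in>W. {last (u # y # ys), z} \<in> H \<longrightarrow> z \<in> set (u # y # ys)"
    using path_extend_maximal[of W "[u, y]" H] fin y by auto
  define L where "L = u # y # ys"
  have L: "distinct L" "path_edges L \<subseteq> H" "set L \<subseteq> W" "hd L = u" "length L \<ge> 2"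
    and maximal: "\<forall>z\<in>W. {last L, z} \<in> H \<longrightarrow> z \<in> set L"
    using ys uw \<open>y \<in> W\<close> unfolding L_def by auto
  have last: "last L = w"
  proof (rule ccontr)
    assume "last L \<noteq> w"
    moreover have "last L \<noteq> u" using L(1) unfolding L_def by (cases ys rule: rev_cases) auto
    moreover have "last L \<in> W" using L(3,5) by (cases L) auto
    ultimately obtain x1 x2 where x: "x1 \<noteq> x2" "{last L, x1} \<in> H" "{last L, x2} \<in> H"
      using two_nbrs by blast
    obtain L0 p where L0: "L = L0 @ [p, last L]" using obtain_last_two[OF L(5)] by blast
    have "x = p" if "{last L, x} \<in> H" for x
    proof -
      have "x \<in> W" "x \<noteq> last L" using complete_edges_memD[of "last L" x W] sub that by auto
      then show ?thesis using acyclic_path_last_neighbour[OF L(1,2) acyc L0] maximal that by blast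
    qed
    then show False using x by blast
  qed
  have "hd L \<in> set L" "last L \<in> set L" using L(5) by (cases L; simp)+
  then have span: "set L = W"
    using acyclic_connected_path_spans[OF fin sub acyc conn L(1) _ L(2,3)] two_nbrs L(4) last
    by (cases L) auto
  have "H \<subseteq> path_edges L"
  proof
    fix e assume "e \<in> H"
    then obtain a b where "e = {a, b}" "a \<in> W" "b \<in> W" "a \<noteq> b"
      using sub unfolding complete_edges_def by blast
    then show "e \<in> path_edges L" using acyclic_path_chord[OF L(1,2) acyc] span \<open>e \<in> H\<close> by simp
  qed
  then show ?thesis using L(1,2,4) last span by blast
qed

section \<open>Trees with prescribed pendant vertices\<close>

locale pendant_setup =
  fixes V :: "'a::finite set" and k :: nat and u w :: 'a and Vu Vw Vuw :: "'a set"
  assumes u: "u \<in> V" and w: "w \<in> V" and u_ne_w: "u \<noteq> w"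
    and Vuw_sub: "Vuw \<subseteq> V - {u, w}" and card_Vuw: "card Vuw = k"
    and Vuw_eq: "Vuw = Vu \<union> Vw" and Vu_Vw_disjoint: "Vu \<inter> Vw = {}"
begin

definition anchor :: "'a \<Rightarrow> 'a" where
  "anchor v = (if v \<in> Vu then u else w)"

definition pendants :: "'a set set" where
  "pendants = (\<lambda>v. {v, anchor v}) ` Vuw"

lemma anchor_notin_Vuw: "anchor v \<in> V - Vuw"
  using u w Vuw_sub unfolding anchor_def by auto

lemma anchor_in_ends: "anchor v \<in> {u, w}"
  unfolding anchor_def by simp

lemma anchor_eq_iff: "v \<in> Vuw \<Longrightarrow> anchor v = x \<longleftrightarrow> (x = u \<and> v \<in> Vu \<or> x = w \<and> v \<in> Vw)"
  using u_ne_w Vuw_eq Vu_Vw_disjoint unfolding anchor_def by auto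

lemma Tk_iff_pendant_edges:
  "t \<in> Tk V k u w Vu Vw \<longleftrightarrow> spanning_tree V t \<and> card (leaves V t) \<le> k \<and>
     (\<forall>v\<in>Vuw. \<forall>e\<in>t. v \<in> e \<longrightarrow> e = {v, anchor v})"
  using Vuw_eq Vu_Vw_disjoint unfolding Tk_def anchor_def by auto

lemma pendant_edges_incident:
  assumes "v \<in> Vuw" "e \<in> pendants" "v \<in> e"
  shows "e = {v, anchor v}"
  using assms anchor_notin_Vuw unfolding pendants_def by auto

lemma delete_verts_Int_pendants: "delete_verts t Vuw \<inter> pendants = {}"
  unfolding delete_verts_def pendants_def by auto

lemma spanning_tree_edge_at_vertex: "spanning_tree V t \<Longrightarrow> v \<in> V \<Longrightarrow> \<exists>e\<in>t. v \<in> e"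
  using spanning_tree_edge_at[of V t v u] spanning_tree_edge_at[of V t v w] u w u_ne_w
  by (cases "v = u") auto

definition pendant_weight :: "real ^ 'a set" where
  "pendant_weight =
     (\<chi> e. \<Sum>v\<in>Vuw. (if v \<in> e then 1 else 0) - (if e = {v, anchor v} then 2 else 0))"

lemma inner_pendant_weight:
  "pendant_weight \<bullet> charvec t =
     (\<Sum>v\<in>Vuw. real (degree t v) - (if {v, anchor v} \<in> t then 2 else 0))"
proof -
  have "pendant_weight \<bullet> charvec t =
      (\<Sum>e\<in>t. \<Sum>v\<in>Vuw. (if v \<in> e then 1 else 0) - (if e = {v, anchor v} then 2 else 0))"
    by (simp add: inner_charvec pendant_weight_def)
  also have "\<dots> = (\<Sum>v\<in>Vuw. \<Sum>e\<in>t. (if v \<in> e then 1 else 0) - (if e = {v, anchor v} then 2 else 0))"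
    by (rule sum.swap)
  also have "\<dots> = (\<Sum>v\<in>Vuw. real (degree t v) - (if {v, anchor v} \<in> t then 2 else 0))"
  proof (rule sum.cong[OF refl])
    fix v
    have "(\<Sum>e\<in>t. if v \<in> e then 1 else 0 :: real) = real (degree t v)"
      unfolding degree_def by (simp add: sum.inter_filter[symmetric])
    moreover have "(\<Sum>e\<in>t. if e = {v, anchor v} then 2 else 0 :: real) =
        (if {v, anchor v} \<in> t then 2 else 0)"
      by (simp add: sum.delta')
    ultimately show "(\<Sum>e\<in>t. (if v \<in> e then 1 else 0) - (if e = {v, anchor v} then 2 else 0 :: real)) =
        real (degree t v) - (if {v, anchor v} \<in> t then 2 else 0)"
      by (simp add: sum_subtractf)
  qed
  finally show ?thesis .
qed

lemma inner_pendant_weight_bound: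
  assumes "spanning_tree V t"
  shows "- real k \<le> pendant_weight \<bullet> charvec t"
    and "pendant_weight \<bullet> charvec t = - real k \<longleftrightarrow> (\<forall>v\<in>Vuw. \<forall>e\<in>t. v \<in> e \<longrightarrow> e = {v, anchor v})"
proof -
  define d where "d v = real (degree t v) - (if {v, anchor v} \<in> t then 2 else 0)" for v
  have d: "-1 \<le> d v" "d v = -1 \<longleftrightarrow> (\<forall>e\<in>t. v \<in> e \<longrightarrow> e = {v, anchor v})" if v: "v \<in> Vuw" for v
  proof -
    obtain e0 where e0: "e0 \<in> t" "v \<in> e0"
      using spanning_tree_edge_at_vertex[OF assms] v Vuw_sub by blast
    show "-1 \<le> d v"
      unfolding d_def by (rule degree_pendant_bound(1)[OF finite e0]) simp
    show "d v = -1 \<longleftrightarrow> (\<forall>e\<in>t. v \<in> e \<longrightarrow> e = {v, anchor v})"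
      unfolding d_def by (rule degree_pendant_bound(2)[OF finite e0]) simp
  qed
  have sum: "pendant_weight \<bullet> charvec t = (\<Sum>v\<in>Vuw. d v + 1) - real k"
    unfolding inner_pendant_weight d_def using card_Vuw by (simp add: sum.distrib)
  have "0 \<le> (\<Sum>v\<in>Vuw. d v + 1)" using d(1) by (intro sum_nonneg) fastforce
  then show "- real k \<le> pendant_weight \<bullet> charvec t" using sum by linarith
  have "pendant_weight \<bullet> charvec t = - real k \<longleftrightarrow> (\<Sum>v\<in>Vuw. d v + 1) = 0"
    using sum by auto
  also have "\<dots> \<longleftrightarrow> (\<forall>v\<in>Vuw. d v + 1 = 0)"
    using d(1) by (intro sum_nonneg_eq_0_iff) fastforce+
  also have "\<dots> \<longleftrightarrow> (\<forall>v\<in>Vuw. \<forall>e\<in>t. v \<in> e \<longrightarrow> e = {v, anchor v})"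
    using d(2) by (auto simp: add_eq_0_iff2)
  finally show "pendant_weight \<bullet> charvec t = - real k \<longleftrightarrow> (\<forall>v\<in>Vuw. \<forall>e\<in>t. v \<in> e \<longrightarrow> e = {v, anchor v})" .
qed

lemma Tk_face_of_LCMST: "convex hull (charvec ` Tk V k u w Vu Vw) face_of LCMST V k"
proof -
  define S where "S = {t. spanning_tree V t \<and> card (leaves V t) \<le> k}"
  have "charvec ` Tk V k u w Vu Vw = {x \<in> charvec ` S. pendant_weight \<bullet> x = - real k}"
    using Tk_iff_pendant_edges inner_pendant_weight_bound(2) unfolding S_def by auto
  moreover have "convex hull {x \<in> charvec ` S. pendant_weight \<bullet> x = - real k} face_of
      convex hull (charvec ` S)"
    using inner_pendant_weight_bound(1) unfolding S_def
    by (intro convex_hull_supporting_hyperplane_face_of) auto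
  ultimately show ?thesis unfolding LCMST_def S_def by simp
qed

lemma Tk_edges_at_pendant_vertex:
  assumes "t \<in> Tk V k u w Vu Vw" "v \<in> Vuw"
  shows "{e \<in> t. v \<in> e} = {{v, anchor v}}"
proof -
  have "\<exists>e\<in>t. v \<in> e"
    using assms spanning_tree_edge_at_vertex Tk_iff_pendant_edges Vuw_sub by blast
  then show ?thesis using assms Tk_iff_pendant_edges by auto
qed

lemma Tk_eq_Un_pendants:
  assumes "t \<in> Tk V k u w Vu Vw"
  shows "t = delete_verts t Vuw \<union> pendants"
proof
  show "t \<subseteq> delete_verts t Vuw \<union> pendants"
    using assms Tk_iff_pendant_edges unfolding delete_verts_def pendants_def by blast
  show "delete_verts t Vuw \<union> pendants \<subseteq> t"
    using Tk_edges_at_pendant_vertex[OF assms] unfolding delete_verts_def pendants_def by blast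
qed

lemma Tk_two_le_degree:
  assumes t: "t \<in> Tk V k u w Vu Vw" and x: "x \<in> V - Vuw"
  shows "2 \<le> degree t x"
proof -
  have st: "spanning_tree V t" and leaves: "card (leaves V t) \<le> k"
    using t Tk_iff_pendant_edges by auto
  have "\<exists>e\<in>t. x \<in> e" using spanning_tree_edge_at_vertex[OF st] x by blast
  then have "0 < degree t x" by (simp add: degree_pos_iff)
  moreover have "degree t x \<noteq> 1"
  proof
    assume "degree t x = 1"
    moreover have "degree t v = 1" if "v \<in> Vuw" for v
      using Tk_edges_at_pendant_vertex[OF t that] unfolding degree_def by simp
    ultimately have "insert x Vuw \<subseteq> leaves V t"
      using x Vuw_sub unfolding leaves_def by auto
    then have "card (insert x Vuw) \<le> card (leaves V t)" by (intro card_mono) auto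
    then show False using x card_Vuw leaves by simp
  qed
  ultimately show ?thesis by linarith
qed

lemma Tk_core_two_neighbours:
  assumes t: "t \<in> Tk V k u w Vu Vw" and v: "v \<in> V - Vuw - {u, w}"
  shows "\<exists>x y. x \<noteq> y \<and> {v, x} \<in> delete_verts t Vuw \<and> {v, y} \<in> delete_verts t Vuw"
proof -
  have st: "spanning_tree V t" and pendant: "\<forall>v\<in>Vuw. \<forall>e\<in>t. v \<in> e \<longrightarrow> e = {v, anchor v}"
    using t Tk_iff_pendant_edges by auto
  then have tV: "t \<subseteq> complete_edges V" unfolding spanning_tree_def by simp
  have "2 \<le> degree t v" using Tk_two_le_degree[OF t] v by blast
  then obtain x y where xy: "x \<noteq> y" "{v, x} \<in> t" "{v, y} \<in> t"
    using two_le_degree_iff[OF finite tV] by blast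
  have "{v, z} \<in> delete_verts t Vuw" if "{v, z} \<in> t" for z
  proof -
    have "z \<notin> Vuw"
    proof
      assume "z \<in> Vuw"
      then have "{v, z} = {z, anchor z}" using pendant[rule_format, of z "{v, z}"] that by simp
      then have "v = anchor z" using v \<open>z \<in> Vuw\<close> by (auto simp: doubleton_eq_iff)
      then show False using v anchor_in_ends[of z] by auto
    qed
    then show ?thesis using that v unfolding delete_verts_def by auto
  qed
  then show ?thesis using xy by blast
qed

lemma Tk_core_ham_path:
  assumes t: "t \<in> Tk V k u w Vu Vw"
  shows "ham_path (V - Vuw) u w (delete_verts t Vuw)"
proof -
  have st: "spanning_tree V t" and pendant: "\<forall>v\<in>Vuw. \<forall>e\<in>t. v \<in> e \<longrightarrow> e = {v, anchor v}"
    using t Tk_iff_pendant_edges by auto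
  then have tV: "t \<subseteq> complete_edges V" unfolding spanning_tree_def by simp
  have acyc: "\<not> has_cycle (delete_verts t Vuw)"
    using st has_cycle_mono unfolding delete_verts_def spanning_tree_def by blast
  have conn: "connected_graph (V - Vuw) (delete_verts t Vuw)"
  proof (rule connected_graph_delete_pendants[OF _ tV])
    show "connected_graph V t" using st unfolding spanning_tree_def by simp
    show "e = {v, anchor v}" if "v \<in> Vuw" "e \<in> t" "v \<in> e" for v e
      using pendant that by blast
    show "anchor v \<notin> Vuw" for v using anchor_notin_Vuw by blast
  qed
  have "u \<in> V - Vuw" "w \<in> V - Vuw" using u w Vuw_sub by auto
  then obtain L where L: "distinct L" "set L = V - Vuw" "hd L = u" "last L = w"
      "delete_verts t Vuw = path_edges L"
    using ham_path_of_acyclic_connected[OF finite delete_verts_subset_complete_edges[OF tV] acyc conn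
        _ _ u_ne_w] Tk_core_two_neighbours[OF t] by blast
  moreover have "L \<noteq> []" using L(2) \<open>u \<in> V - Vuw\<close> by auto
  ultimately show ?thesis unfolding ham_path_iff_path_edges by blast
qed

text \<open>Otherwise the end of the core path would be a leaf of \<open>t\<close> outside \<open>Vuw\<close>.\<close>

lemma Tk_core_end_is_anchor:
  assumes t: "t \<in> Tk V k u w Vu Vw"
    and L: "distinct L" "set L = V - Vuw" "delete_verts t Vuw = path_edges L" "2 \<le> length L"
  shows "\<exists>v\<in>Vuw. anchor v = hd L"
proof (rule ccontr)
  assume "\<not> (\<exists>v\<in>Vuw. anchor v = hd L)"
  then have no_anchor: "\<forall>v\<in>Vuw. anchor v \<noteq> hd L" by blast
  have pendant: "\<forall>v\<in>Vuw. \<forall>e\<in>t. v \<in> e \<longrightarrow> e = {v, anchor v}"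
    using t unfolding Tk_iff_pendant_edges by blast
  have "L \<noteq> []" using L(4) by auto
  then have x: "hd L \<in> V - Vuw" using L(2) hd_in_set by blast
  have "{e \<in> t. hd L \<in> e} \<subseteq> delete_verts t Vuw"
  proof
    fix e assume e: "e \<in> {e \<in> t. hd L \<in> e}"
    have "e \<inter> Vuw = {}"
    proof (rule ccontr)
      assume "e \<inter> Vuw \<noteq> {}"
      then obtain v where "v \<in> Vuw" "v \<in> e" by blast
      then have "e = {v, anchor v}" using pendant[rule_format, of v e] e by simp
      then show False using e x no_anchor \<open>v \<in> Vuw\<close> by auto
    qed
    then show "e \<in> delete_verts t Vuw" using e unfolding delete_verts_def by blast
  qed
  then have "{e \<in> t. hd L \<in> e} = {e \<in> path_edges L. hd L \<in> e}"
    using L(3) unfolding delete_verts_def by auto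
  then have "degree t (hd L) = 1"
    using card_path_edges_at_hd[OF L(1,4)] unfolding degree_def by simp
  then show False using Tk_two_le_degree[OF t x] by simp
qed

lemma Tk_anchors_nonempty:
  assumes t: "t \<in> Tk V k u w Vu Vw"
  shows "Vu \<noteq> {}" and "Vw \<noteq> {}"
proof -
  obtain L where L: "distinct L" "set L = V - Vuw" "hd L = u" "last L = w"
      "delete_verts t Vuw = path_edges L"
    using Tk_core_ham_path[OF t] unfolding ham_path_iff_path_edges by blast
  have "2 \<le> length L" using L u w u_ne_w Vuw_sub by (cases L; cases "tl L") auto
  obtain v where "v \<in> Vuw" "anchor v = u"
    using Tk_core_end_is_anchor[OF t L(1,2,5) \<open>2 \<le> length L\<close>] L(3) by blast
  then show "Vu \<noteq> {}" using anchor_eq_iff[of v u] u_ne_w by auto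
  have R: "distinct (rev L)" "set (rev L) = V - Vuw" "delete_verts t Vuw = path_edges (rev L)"
    "2 \<le> length (rev L)"
    using L \<open>2 \<le> length L\<close> by (simp_all add: path_edges_rev)
  obtain v' where "v' \<in> Vuw" "anchor v' = hd (rev L)"
    using Tk_core_end_is_anchor[OF t R] by blast
  moreover have "hd (rev L) = w" using L(4) \<open>2 \<le> length L\<close> by (cases L) (auto simp: hd_rev)
  ultimately show "Vw \<noteq> {}" using anchor_eq_iff[of v' w] u_ne_w by auto
qed

lemma pendants_subset_complete_edges: "pendants \<subseteq> complete_edges V"
proof
  fix e assume "e \<in> pendants"
  then obtain v where v: "v \<in> Vuw" "e = {v, anchor v}" unfolding pendants_def by blast
  then have "v \<in> V" "anchor v \<in> V" "v \<noteq> anchor v" using Vuw_sub anchor_notin_Vuw[of v] by auto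
  then show "e \<in> complete_edges V" unfolding v(2) complete_edges_def by blast
qed

lemma attach_pendants_acyclic:
  assumes "ham_path (V - Vuw) u w p"
  shows "\<not> has_cycle (p \<union> pendants)"
proof
  obtain L where L: "distinct L" "p = path_edges L"
    using assms unfolding ham_path_iff_path_edges by blast
  assume "has_cycle (p \<union> pendants)"
  moreover have "\<exists>v\<in>e. \<forall>e'\<in>p \<union> pendants. v \<in> e' \<longrightarrow> e' = e" if e: "e \<in> pendants" for e
  proof -
    obtain v where v: "v \<in> Vuw" "e = {v, anchor v}" using e unfolding pendants_def by blast
    have "e' = e" if "e' \<in> p \<union> pendants" "v \<in> e'" for e'
      using that ham_path_edge_subset[OF assms] pendant_edges_incident[OF v(1)] v by blast
    then show ?thesis using v(2) by blast
  qed
  ultimately have "has_cycle p" using has_cycle_Un_pendant_edges by blast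
  then show False using acyclic_path_edges[OF L(1)] L(2) by simp
qed

lemma attach_pendants_spanning_tree:
  assumes "ham_path (V - Vuw) u w p"
  shows "spanning_tree V (p \<union> pendants)"
proof -
  obtain L where L: "distinct L" "set L = V - Vuw" "p = path_edges L"
    using assms unfolding ham_path_iff_path_edges by blast
  have "p \<subseteq> complete_edges V"
    using path_edges_subset_complete_edges[OF L(1)] complete_edges_mono[of "set L" V] L(2,3) by blast
  moreover have "connected_graph ((V - Vuw) \<union> Vuw) (p \<union> pendants)"
  proof (rule connected_graph_attach)
    show "connected_graph (V - Vuw) p" using connected_graph_path_edges[of L] L(2,3) by simp
    show "v \<in> Vuw \<Longrightarrow> anchor v \<in> V - Vuw \<and> {v, anchor v} \<in> p \<union> pendants" for v
      using anchor_notin_Vuw unfolding pendants_def by blast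
  qed simp
  moreover have "(V - Vuw) \<union> Vuw = V" using Vuw_sub by blast
  ultimately show ?thesis
    unfolding spanning_tree_def
    using pendants_subset_complete_edges attach_pendants_acyclic[OF assms] by simp
qed

lemma delete_verts_attach_pendants:
  assumes "ham_path (V - Vuw) u w p"
  shows "delete_verts (p \<union> pendants) Vuw = p"
  using ham_path_edge_subset[OF assms] unfolding delete_verts_def pendants_def by auto

lemma attach_pendants_two_le_degree:
  assumes p: "ham_path (V - Vuw) u w p" and "Vu \<noteq> {}" "Vw \<noteq> {}" and x: "x \<in> V - Vuw"
  shows "2 \<le> degree (p \<union> pendants) x"
proof -
  obtain L where L: "distinct L" "set L = V - Vuw" "hd L = u" "last L = w" "p = path_edges L"
    using p unfolding ham_path_iff_path_edges by blast
  have "2 \<le> length L" using L u w u_ne_w Vuw_sub by (cases L; cases "tl L") auto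
  have endpoint: "\<exists>y z. y \<noteq> z \<and> {hd L', y} \<in> p \<union> pendants \<and> {hd L', z} \<in> p \<union> pendants"
    if L': "set L' = V - Vuw" "p = path_edges L'" "2 \<le> length L'"
      and v: "v \<in> Vuw" "anchor v = hd L'" for L' v
  proof -
    obtain a b rest where ab: "L' = a # b # rest" using L'(3) by (cases L'; cases "tl L'") auto
    then have "{hd L', b} \<in> p" "b \<in> V - Vuw" using L'(1,2) by auto
    moreover have "{hd L', v} \<in> pendants" using v unfolding pendants_def by (auto simp: insert_commute)
    moreover have "b \<noteq> v" using \<open>b \<in> V - Vuw\<close> v(1) by auto
    ultimately show ?thesis by blast
  qed
  obtain vu vw where vu: "vu \<in> Vuw" "anchor vu = u" and vw: "vw \<in> Vuw" "anchor vw = w"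
    using assms(2,3) anchor_eq_iff Vuw_eq by blast
  have "\<exists>y z. y \<noteq> z \<and> {x, y} \<in> p \<union> pendants \<and> {x, z} \<in> p \<union> pendants"
  proof -
    consider "x = u" | "x = w" | "x \<noteq> hd L" "x \<noteq> last L" using L(3,4) by blast
    then show ?thesis
    proof cases
      case 1
      then show ?thesis using endpoint[OF L(2,5) \<open>2 \<le> length L\<close> vu(1)] vu(2) L(3) by simp
    next
      case 2
      have "set (rev L) = V - Vuw" "p = path_edges (rev L)" "2 \<le> length (rev L)"
        using L \<open>2 \<le> length L\<close> by (simp_all add: path_edges_rev)
      then show ?thesis using endpoint[of "rev L" vw] vw L(4) 2 by (simp add: hd_rev)
    next
      case 3
      then show ?thesis using path_edges_interior_two_neighbours[OF L(1)] x L(2,5) by blast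
    qed
  qed
  moreover have "p \<union> pendants \<subseteq> complete_edges V"
    using attach_pendants_spanning_tree[OF p] unfolding spanning_tree_def by simp
  ultimately show ?thesis using two_le_degree_iff[OF finite] by blast
qed

lemma attach_pendants_Tk:
  assumes p: "ham_path (V - Vuw) u w p" and "Vu \<noteq> {}" "Vw \<noteq> {}"
  shows "p \<union> pendants \<in> Tk V k u w Vu Vw"
proof -
  have "leaves V (p \<union> pendants) \<subseteq> Vuw"
  proof
    fix x assume "x \<in> leaves V (p \<union> pendants)"
    then have "x \<in> V" "degree (p \<union> pendants) x = 1" unfolding leaves_def by auto
    then show "x \<in> Vuw" using attach_pendants_two_le_degree[OF assms, of x] by fastforce
  qed
  then have "card (leaves V (p \<union> pendants)) \<le> k"
    using card_Vuw by (metis card_mono finite)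
  moreover have "\<forall>v\<in>Vuw. \<forall>e\<in>p \<union> pendants. v \<in> e \<longrightarrow> e = {v, anchor v}"
  proof (intro ballI impI)
    fix v e assume "v \<in> Vuw" "e \<in> p \<union> pendants" "v \<in> e"
    moreover have "e \<notin> p" using ham_path_edge_subset[OF p] calculation(1,3) by blast
    ultimately show "e = {v, anchor v}" using pendant_edges_incident by blast
  qed
  ultimately show ?thesis
    unfolding Tk_iff_pendant_edges using attach_pendants_spanning_tree[OF p] by simp
qed

lemma charvec_Tk:
  assumes "t \<in> Tk V k u w Vu Vw"
  shows "charvec t = charvec pendants + charvec (delete_verts t Vuw)"
  using charvec_Un_disjoint[OF delete_verts_Int_pendants] Tk_eq_Un_pendants[OF assms]
  by (metis add.commute)

lemma Tk_face_eq_translated_HP: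
  assumes "Tk V k u w Vu Vw \<noteq> {}"
  shows "convex hull (charvec ` Tk V k u w Vu Vw) = (+) (charvec pendants) ` HP (V - Vuw) u w"
proof -
  have "Vu \<noteq> {}" "Vw \<noteq> {}" using assms Tk_anchors_nonempty by blast+
  have "charvec ` Tk V k u w Vu Vw =
      (+) (charvec pendants) ` charvec ` {p. ham_path (V - Vuw) u w p}"
  proof
    show "charvec ` Tk V k u w Vu Vw \<subseteq> (+) (charvec pendants) ` charvec ` {p. ham_path (V - Vuw) u w p}"
      using charvec_Tk Tk_core_ham_path by blast
    show "(+) (charvec pendants) ` charvec ` {p. ham_path (V - Vuw) u w p} \<subseteq> charvec ` Tk V k u w Vu Vw"
    proof clarify
      fix p assume p: "ham_path (V - Vuw) u w p"
      then have "p \<union> pendants \<in> Tk V k u w Vu Vw"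
        using attach_pendants_Tk \<open>Vu \<noteq> {}\<close> \<open>Vw \<noteq> {}\<close> by blast
      moreover have "charvec (p \<union> pendants) = charvec pendants + charvec p"
        using charvec_Tk[OF calculation] delete_verts_attach_pendants[OF p] by simp
      ultimately show "charvec pendants + charvec p \<in> charvec ` Tk V k u w Vu Vw"
        by (metis image_eqI)
    qed
  qed
  then show ?thesis unfolding HP_def by (simp add: convex_hull_translation)
qed

end

theorem lemma3:
  fixes V :: "('a::finite) set" and n k :: nat and u w :: 'a and Vu Vw Vuw :: "'a set"
    and t1 t2 :: "'a set set"
  assumes "card V = n"
    and "0 < k" and "k < n"
    and "u \<in> V" and "w \<in> V" and "u \<noteq> w"
    and "Vuw \<subseteq> V - {u, w}" and "card Vuw = k"
    and "Vuw = Vu \<union> Vw" and "Vu \<inter> Vw = {}"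
    and "t1 \<in> Tk V k u w Vu Vw" and "t2 \<in> Tk V k u w Vu Vw"
  shows "\<not> adjacent_vertices (LCMST V k) (charvec t1) (charvec t2) \<longleftrightarrow>
         \<not> adjacent_vertices (HP (V - Vuw) u w)
             (charvec (delete_verts t1 Vuw)) (charvec (delete_verts t2 Vuw))"
proof -
  interpret pendant_setup V k u w Vu Vw Vuw
    using assms by unfold_locales auto
  define F where "F = (+) (charvec pendants) ` HP (V - Vuw) u w"
  have "Tk V k u w Vu Vw \<noteq> {}" using assms(11) by blast
  then have face: "F face_of LCMST V k"
    using Tk_face_of_LCMST Tk_face_eq_translated_HP unfolding F_def by simp
  have translate: "charvec t = charvec pendants + charvec (delete_verts t Vuw)"
    and in_face: "charvec t \<in> F" if "t \<in> Tk V k u w Vu Vw" for t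
  proof -
    show "charvec t = charvec pendants + charvec (delete_verts t Vuw)"
      by (rule charvec_Tk[OF that])
    moreover have "charvec (delete_verts t Vuw) \<in> HP (V - Vuw) u w"
      using Tk_core_ham_path[OF that] hull_subset unfolding HP_def by fastforce
    ultimately show "charvec t \<in> F" unfolding F_def by simp
  qed
  have "adjacent_vertices (LCMST V k) (charvec t1) (charvec t2) \<longleftrightarrow>
      adjacent_vertices F (charvec t1) (charvec t2)"
    using adjacent_vertices_face_iff[OF face] in_face assms(11,12) by blast
  also have "\<dots> \<longleftrightarrow> adjacent_vertices (HP (V - Vuw) u w)
      (charvec (delete_verts t1 Vuw)) (charvec (delete_verts t2 Vuw))"
    unfolding F_def translate[OF assms(11)] translate[OF assms(12)]
    by (rule adjacent_vertices_translation)
  finally show ?thesis by simp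
qed

end
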